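(* Let $P\subseteq\mathbb{R}^2$ be a convex polygon such that $\tau P=P^{\circ}$. Then $P$ has at least $6$ vertices.
   Context: $\tau:\mathbb{R}^2\to\mathbb{R}^2$ denotes the $90^\circ$ counterclockwise rotation. The polar of $P$ is $P^{\circ}=\{x\in\mathbb{R}^2: y^\top x\le 1\text{ for all }y\in P\}$. *)

theory Defs
  imports "HOL-Analysis.Analysis"
begin

definition rot90 :: "real^2 \<Rightarrow> real^2" where
  "rot90 x = (\<chi> i. if i = 1 then - (x $ 2) else x $ 1)"

definition polar_set :: "(real^2) set \<Rightarrow> (real^2) set" where
  "polar_set P = {x. \<forall>y\<in>P. y \<bullet> x \<le> 1}"

definition convex_polygon :: "(real^2) set \<Rightarrow> bool" where
  "convex_polygon P \<longleftrightarrow> polytope P \<and> interior P \<noteq> {}"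

definition vertices :: "(real^2) set \<Rightarrow> (real^2) set" where
  "vertices P = {v. v extreme_point_of P}"

end

theory Submission
  imports Defs
begin

text \<open>If \<open>rot90 ` P\<close> is the polar of \<open>P\<close>, then for \<open>x, y \<in> P\<close> we get
  \<open>y \<bullet> rot90 (-x) = x \<bullet> rot90 y \<le> 1\<close>, so \<open>P\<close> is centrally symmetric and its
  vertices come in antipodal pairs \<open>\<plusminus>v\<close> with \<open>v \<noteq> 0\<close>. With fewer than six vertices
  \<open>P\<close> is a parallelogram with vertices \<open>\<plusminus>a, \<plusminus>b\<close>. The point \<open>x\<close> with
  \<open>a \<bullet> x = b \<bullet> x = 1\<close> lies in the polar, so \<open>x = rot90 z\<close> with \<open>z \<in> P\<close>; yet the
  functional \<open>u = - rot90 (a + b)\<close> is at most \<open>\<bar>a \<bullet> rot90 b\<bar> \<le> 1\<close> on the vertices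
  while \<open>u \<bullet> z = (a + b) \<bullet> x = 2\<close>.\<close>

lemma rot90_nth [simp]: "rot90 x $ 1 = - (x $ 2)" "rot90 x $ 2 = x $ 1"
  by (simp_all add: rot90_def)

lemma inner_real2: "(x::real^2) \<bullet> y = x $ 1 * y $ 1 + x $ 2 * y $ 2"
  by (simp add: inner_vec_def sum_2)

lemma linear_rot90: "linear rot90"
  by (rule linearI) (simp_all add: vec_eq_iff forall_2)

lemma rot90_eq_iff [simp]: "rot90 x = rot90 y \<longleftrightarrow> x = y"
  by (auto simp: vec_eq_iff forall_2)

lemma inner_rot90_self [simp]: "x \<bullet> rot90 x = 0"
  by (simp add: inner_real2)

lemma inner_rot90_antisym: "x \<bullet> rot90 y = - (y \<bullet> rot90 x)"
  by (simp add: inner_real2)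

lemma polar_set_convex_hull: "polar_set (convex hull V) = polar_set V"
proof
  show "polar_set (convex hull V) \<subseteq> polar_set V"
    using hull_subset[of V convex] unfolding polar_set_def by blast
  show "polar_set V \<subseteq> polar_set (convex hull V)"
  proof
    fix x assume "x \<in> polar_set V"
    then have "V \<subseteq> {y. x \<bullet> y \<le> 1}"
      by (auto simp: polar_set_def inner_commute[of x])
    then have "convex hull V \<subseteq> {y. x \<bullet> y \<le> 1}"
      by (rule hull_minimal) (rule convex_halfspace_le)
    then show "x \<in> polar_set (convex hull V)"
      by (auto simp: polar_set_def inner_commute[of x])
  qed
qed

lemma rot90_polar_imp_symmetric:
  assumes self_polar: "rot90 ` P = polar_set P" and "x \<in> P"
  shows "- x \<in> P"
proof -
  have "y \<bullet> rot90 (- x) \<le> 1" if "y \<in> P" for y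
  proof -
    have "rot90 y \<in> polar_set P"
      using self_polar that by blast
    then have "x \<bullet> rot90 y \<le> 1"
      using \<open>x \<in> P\<close> by (simp add: polar_set_def)
    then show ?thesis
      by (simp add: linear_neg[OF linear_rot90] inner_rot90_antisym[of y])
  qed
  then have "rot90 (- x) \<in> rot90 ` P"
    using self_polar by (simp add: polar_set_def)
  then show ?thesis
    by auto
qed

lemma self_eq_neg_iff:
  fixes a :: "'a::real_vector"
  shows "a = - a \<longleftrightarrow> a = 0"
proof
  assume "a = - a"
  then have "2 *\<^sub>R a = 0"
    by (metis scaleR_2 add.right_inverse)
  then show "a = 0"
    by simp
qed simp

lemma extreme_point_of_symmetric_neg:
  fixes S :: "'a::real_vector set"
  assumes "\<And>x. x \<in> S \<Longrightarrow> - x \<in> S" and "v extreme_point_of S"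
  shows "(- v) extreme_point_of S"
  unfolding extreme_point_of_def
proof (intro conjI ballI notI)
  show "- v \<in> S"
    using assms by (simp add: extreme_point_of_def)
next
  fix a b assume "a \<in> S" "b \<in> S" "- v \<in> open_segment a b"
  then have "v \<in> open_segment (- a) (- b)"
    using open_segment_linear_image[OF linear_uminus] by (force simp: inj_def)
  then show False
    using assms \<open>a \<in> S\<close> \<open>b \<in> S\<close> by (auto simp: extreme_point_of_def)
qed

lemma extreme_point_of_symmetric_zero:
  fixes S :: "'a::real_vector set"
  assumes "\<And>x. x \<in> S \<Longrightarrow> - x \<in> S" and "0 extreme_point_of S"
  shows "S = {0}"
proof -
  have "p = 0" if "p \<in> S" for p
  proof (rule ccontr)
    assume "p \<noteq> 0"
    then have "midpoint p (- p) \<in> open_segment p (- p)"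
      by (simp add: midpoint_in_open_segment self_eq_neg_iff)
    moreover have "midpoint p (- p) = 0"
      by (simp add: midpoint_def)
    ultimately show False
      using assms that by (auto simp: extreme_point_of_def)
  qed
  then show ?thesis
    using assms by (auto simp: extreme_point_of_def)
qed

lemma card_Diff_antipodal_pair:
  fixes a :: "'a::real_vector"
  assumes "finite S" "a \<in> S" "- a \<in> S" "a \<noteq> 0"
  shows "card (S - {a, - a}) = card S - 2"
  using assms self_eq_neg_iff[of a] by (simp add: card_Diff_subset)

lemma symmetric_set_card_less_6:
  fixes S :: "'a::real_vector set"
  assumes "finite S" "S \<noteq> {}" "0 \<notin> S" and sym: "\<And>x. x \<in> S \<Longrightarrow> - x \<in> S"
    and "card S < 6"
  obtains a b where "S = {a, - a, b, - b}"
proof -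
  obtain a where a: "a \<in> S"
    using \<open>S \<noteq> {}\<close> by blast
  define T where "T = S - {a, - a}"
  have card_T: "card T = card S - 2"
    unfolding T_def using assms a by (intro card_Diff_antipodal_pair) auto
  show ?thesis
  proof (cases "T = {}")
    case True
    then have "S = {a, - a, a, - a}"
      using a sym unfolding T_def by blast
    then show ?thesis
      using that by blast
  next
    case False
    then obtain b where b: "b \<in> T"
      by blast
    define R where "R = T - {b, - b}"
    have card_R: "card R = card T - 2"
      unfolding R_def using assms b by (intro card_Diff_antipodal_pair) (auto simp: T_def)
    have "c \<notin> R" for c
    proof
      assume c: "c \<in> R"
      then have "{c, - c} \<subseteq> R" and "c \<noteq> - c"
        using sym \<open>0 \<notin> S\<close> unfolding R_def T_def by (auto simp: self_eq_neg_iff)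
      then have "2 \<le> card R"
        using card_mono[of R "{c, - c}"] \<open>finite S\<close> unfolding R_def T_def by simp
      then show False
        using card_R card_T \<open>card S < 6\<close> by linarith
    qed
    then have "S = {a, - a, b, - b}"
      using a b sym unfolding R_def T_def by blast
    then show ?thesis
      using that by blast
  qed
qed

lemma interior_convex_hull_collinear_pairs:
  assumes "a \<noteq> 0" "a \<bullet> rot90 b = 0"
  shows "interior (convex hull {a, - a, b, - b}) = {}"
proof -
  have "{a, - a, b, - b} \<subseteq> {y. rot90 a \<bullet> y = 0}"
    using assms(2) by (auto simp: inner_real2 algebra_simps)
  then have "convex hull {a, - a, b, - b} \<subseteq> {y. rot90 a \<bullet> y = 0}"
    by (rule hull_minimal) (rule convex_hyperplane)
  then have "interior (convex hull {a, - a, b, - b}) \<subseteq> interior {y. rot90 a \<bullet> y = 0}"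
    by (rule interior_mono)
  also have "\<dots> = {}"
    using \<open>a \<noteq> 0\<close> by (intro interior_hyperplane) (auto simp: vec_eq_iff forall_2)
  finally show ?thesis
    by blast
qed

lemma rot90_polar_not_parallelogram:
  assumes P: "P = convex hull {a, - a, b, - b}" and "a \<noteq> 0" "interior P \<noteq> {}"
    and self_polar: "rot90 ` P = polar_set P"
  shows False
proof -
  define c where "c = a \<bullet> rot90 b"
  have "c \<noteq> 0"
    using interior_convex_hull_collinear_pairs assms unfolding c_def by blast
  have polar: "y \<bullet> rot90 x \<le> 1" if "x \<in> P" "y \<in> P" for x y
    using self_polar that unfolding polar_set_def by blast
  have "a \<in> P" "- a \<in> P" "b \<in> P"
    unfolding P by (simp_all add: hull_inc)
  then have "\<bar>c\<bar> \<le> 1"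
    using polar[of b a] polar[of b "- a"] unfolding c_def by simp
  define x where "x = (1 / c) *\<^sub>R rot90 (b - a)"
  have "a \<bullet> x = 1" "b \<bullet> x = 1"
    using \<open>c \<noteq> 0\<close> unfolding x_def c_def
    by (simp_all add: linear_diff[OF linear_rot90] inner_diff_right inner_rot90_antisym[of b a])
  then have "x \<in> polar_set P"
    unfolding P polar_set_convex_hull by (simp add: polar_set_def)
  then obtain z where "z \<in> P" and x: "x = rot90 z"
    using self_polar by blast
  define u where "u = - rot90 (a + b)"
  have "u \<in> polar_set P"
    using \<open>\<bar>c\<bar> \<le> 1\<close> unfolding P polar_set_convex_hull u_def c_def
    by (simp add: polar_set_def linear_add[OF linear_rot90] inner_diff_right inner_rot90_antisym[of b a] abs_le_iff)
  then have "z \<bullet> u \<le> 1"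
    using \<open>z \<in> P\<close> by (simp add: polar_set_def)
  moreover have "z \<bullet> u = (a + b) \<bullet> x"
    unfolding u_def x using inner_rot90_antisym[of z "a + b"] by simp
  ultimately show False
    using \<open>a \<bullet> x = 1\<close> \<open>b \<bullet> x = 1\<close> by (simp add: inner_add_left)
qed

theorem proposition5:
  fixes P :: "(real^2) set"
  assumes "convex_polygon P"
    and "rot90 ` P = polar_set P"
  shows "card (vertices P) \<ge> 6"
proof (rule ccontr)
  assume "\<not> card (vertices P) \<ge> 6"
  have poly: "polytope P" and int: "interior P \<noteq> {}"
    using assms(1) by (auto simp: convex_polygon_def)
  define V where "V = vertices P"
  have "finite V"
    unfolding V_def vertices_def
    by (simp add: finite_polyhedron_extreme_points poly polytope_imp_polyhedron)
  have P_hull: "P = convex hull V"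
    unfolding V_def vertices_def
    using Krein_Milman_Minkowski poly polytope_imp_compact polytope_imp_convex by blast
  have sym_P: "- x \<in> P" if "x \<in> P" for x
    using rot90_polar_imp_symmetric assms(2) that .
  have sym_V: "- v \<in> V" if "v \<in> V" for v
    using extreme_point_of_symmetric_neg[OF sym_P] that unfolding V_def vertices_def by blast
  have "0 \<notin> V"
    using extreme_point_of_symmetric_zero[OF sym_P] int unfolding V_def vertices_def by auto
  moreover have "V \<noteq> {}"
    using P_hull int by auto
  moreover have "card V < 6"
    using \<open>\<not> card (vertices P) \<ge> 6\<close> unfolding V_def by simp
  ultimately obtain a b where V: "V = {a, - a, b, - b}"
    using symmetric_set_card_less_6 \<open>finite V\<close> sym_V by blast
  have "a \<noteq> 0"
    using \<open>0 \<notin> V\<close> V by blast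
  show False
    using rot90_polar_not_parallelogram[OF P_hull[unfolded V] \<open>a \<noteq> 0\<close> int assms(2)] .
qed

end
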